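(* Let $\alpha\in\mathbb{Z}_2^n$ and $c\in\mathbb{Z}_2$. Then $$\max_{\beta,\gamma\in\mathbb{Z}_2^n}\mathrm{cadp}_c(\alpha,\beta,\gamma)\le\max_{\beta,\gamma\in\mathbb{Z}_2^n}\mathrm{cadp}_0(\alpha,\beta,\gamma)=\max_{\beta,\gamma\in\mathbb{Z}_2^n}\mathrm{adp}^{\oplus}(\alpha,\beta\to\gamma)=\mathrm{adp}^{\oplus}(\alpha,\alpha\to0).$$
   Context: For $x\in\mathbb{Z}_2^n$, $x=(x_0,\dots,x_{n-1})$ is identified with the integer $\sum_i x_i2^{n-1-i}$; $+$ is addition modulo $2^n$, $\oplus$ is bitwise XOR. $\mathrm{adp}^{\oplus}(\alpha,\beta\to\gamma)=4^{-n}\#\{(x,y): (x+\alpha)\oplus(y+\beta)=(x\oplus y)+\gamma\}$. Indices $0,\dots,7$ are identified with $\mathbb{Z}_2^3$ via $(p_0,p_1,p_2)\leftrightarrow4p_0+2p_1+p_2$; $e_0,\dots,e_7$ are the standard basis row vectors of $\mathbb{Q}^8$. $A_0$ is $\frac14$ times the $8\times8$ matrix with rows $(4,0,0,1,0,1,1,0)$, $(0,0,0,1,0,1,0,0)$, $(0,0,0,1,0,0,1,0)$, $(0,0,0,1,0,0,0,0)$, $(0,0,0,0,0,1,1,0)$, $(0,0,0,0,0,1,0,0)$, $(0,0,0,0,0,0,1,0)$, $(0,\dots,0)$, and $(A_k)_{i,j}=(A_0)_{i\oplus k,j\oplus k}$. For $\alpha,\beta,\gamma$ let $\omega_i=4\alpha_i+2\beta_i+\gamma_i$.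 With $L_0=(1,0,1,0,1,0,1,0)$, $L_1=(0,1,0,1,0,1,0,1)$, $\mathrm{cadp}_c(\alpha,\beta,\gamma)=L_cA_{\omega_0}\cdots A_{\omega_{n-1}}e_0^T$. (It is known that $\mathrm{adp}^{\oplus}(\alpha,\beta\to\gamma)=\mathrm{cadp}_0(\alpha,\beta,\gamma)+\mathrm{cadp}_1(\alpha,\beta,\gamma)$.) *)

theory Defs
  imports Main "HOL.Real"
begin

text \<open>Elements of Z_2^n are represented by natural numbers x < 2^n, with
  x = (x_0,...,x_{n-1}) identified with sum x_i 2^(n-1-i); hence the i-th
  coordinate x_i is the bit of x at position n-1-i.\<close>

definition coord :: "nat \<Rightarrow> nat \<Rightarrow> nat \<Rightarrow> nat" where
  "coord n x i = (if bit x (n - 1 - i) then 1 else 0)"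

definition adp_xor :: "nat \<Rightarrow> nat \<Rightarrow> nat \<Rightarrow> nat \<Rightarrow> real" where
  "adp_xor n \<alpha> \<beta> \<gamma> =
     real (card {(x, y). x < 2^n \<and> y < 2^n \<and>
        xor ((x + \<alpha>) mod 2^n) ((y + \<beta>) mod 2^n) = ((xor x y) + \<gamma>) mod 2^n})
     / 4 ^ n"

definition A0_rows :: "nat list list" where
  "A0_rows = [[4,0,0,1,0,1,1,0],
              [0,0,0,1,0,1,0,0],
              [0,0,0,1,0,0,1,0],
              [0,0,0,1,0,0,0,0],
              [0,0,0,0,0,1,1,0],
              [0,0,0,0,0,1,0,0],
              [0,0,0,0,0,0,1,0],
              [0,0,0,0,0,0,0,0]]"

definition A0 :: "nat \<Rightarrow> nat \<Rightarrow> real" where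
  "A0 i j = (if i < 8 \<and> j < 8 then real (A0_rows ! i ! j) / 4 else 0)"

definition Amat :: "nat \<Rightarrow> nat \<Rightarrow> nat \<Rightarrow> real" where
  "Amat k i j = A0 (xor i k) (xor j k)"

definition vecmat :: "(nat \<Rightarrow> real) \<Rightarrow> (nat \<Rightarrow> nat \<Rightarrow> real) \<Rightarrow> nat \<Rightarrow> real" where
  "vecmat v M = (\<lambda>j. \<Sum>i<8. v i * M i j)"

definition Lvec :: "nat \<Rightarrow> nat \<Rightarrow> real" where
  "Lvec c j = (if j < 8 \<and> j mod 2 = c then 1 else 0)"

definition omega :: "nat \<Rightarrow> nat \<Rightarrow> nat \<Rightarrow> nat \<Rightarrow> nat \<Rightarrow> nat" where
  "omega n \<alpha> \<beta> \<gamma> i = 4 * coord n \<alpha> i + 2 * coord n \<beta> i + coord n \<gamma> i"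

text \<open>cadp_c = L_c A_{w_0} ... A_{w_{n-1}} e_0^T\<close>
definition cadp :: "nat \<Rightarrow> nat \<Rightarrow> nat \<Rightarrow> nat \<Rightarrow> nat \<Rightarrow> real" where
  "cadp n c \<alpha> \<beta> \<gamma> =
     foldl (\<lambda>v i. vecmat v (Amat (omega n \<alpha> \<beta> \<gamma> i))) (Lvec c) [0..<n] 0"

end

theory Submission
  imports Defs
begin

text \<open>
  The matrices \<open>A\<^sub>w\<close> are the transition matrices of the carry automaton of the three
  additions \<open>x + \<alpha>\<close>, \<open>y + \<beta>\<close> and \<open>(x \<oplus> y) + \<gamma>\<close>, read from the least significant bit:
  \<open>4 (A\<^sub>w)\<^sub>i\<^sub>s\<close> is the number of bit pairs \<open>(x\<^sub>0, y\<^sub>0)\<close> that are consistent with the letter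
  \<open>w\<close> in carry state \<open>s\<close> and lead to carry state \<open>i\<close>. Hence \<open>4\<^sup>n cadp\<^sub>c\<close> counts the solutions
  whose last carry is \<open>c\<close>, and \<open>adp\<^sup>\<oplus> = cadp\<^sub>0 + cadp\<^sub>1\<close>.

  For the maximum, follow the row vector \<open>L\<^sub>c A\<^sub>\<omega>\<^sub>0 \<cdots> A\<^sub>\<omega>\<^sub>k\<close> letter by letter. A system of
  linear bounds depending on two numbers \<open>a, b\<close> is preserved by every \<open>A\<^sub>w\<close>, with \<open>(a, b)\<close>
  becoming \<open>(a, (a + b)/4)\<close> or \<open>((a + b)/4, b)\<close> according to the bit of \<open>\<alpha>\<close>; along the
  word of \<open>(\<alpha>, \<alpha>, 0)\<close> the entries \<open>0\<close> and \<open>6\<close> of the row are exactly \<open>a\<close> and \<open>b\<close>. So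
  \<open>cadp\<^sub>c(\<alpha>, \<beta>, \<gamma>) \<le> cadp\<^sub>0(\<alpha>, \<alpha>, 0)\<close> and likewise
  \<open>adp\<^sup>\<oplus>(\<alpha>, \<beta> \<rightarrow> \<gamma>) \<le> cadp\<^sub>0(\<alpha>, \<alpha>, 0) \<le> adp\<^sup>\<oplus>(\<alpha>, \<alpha> \<rightarrow> 0)\<close>.
\<close>

lemma sum_lessThan_8:
  fixes f :: "nat \<Rightarrow> real"
  shows "(\<Sum>i<8. f i) = f 0 + f 1 + f 2 + f 3 + f 4 + f 5 + f 6 + f 7"
  by (simp add: eval_nat_numeral lessThan_Suc add.commute add.left_commute)

lemma sum_lessThan_2: "(\<Sum>i<2. f i) = f 0 + f (1::nat)"
  by (simp add: numeral_2_eq_2)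

lemma less_8_cases:
  "(w::nat) < 8 \<Longrightarrow> w = 0 \<or> w = 1 \<or> w = 2 \<or> w = 3 \<or> w = 4 \<or> w = 5 \<or> w = 6 \<or> w = 7"
  by auto

lemmas vecmat_Amat_simps = vecmat_def sum_lessThan_8 Amat_def A0_def A0_rows_def

definition row_prod :: "(nat \<Rightarrow> real) \<Rightarrow> nat list \<Rightarrow> nat \<Rightarrow> real" where
  "row_prod v ws = foldl (\<lambda>u w. vecmat u (Amat w)) v ws"

lemma row_prod_Nil [simp]: "row_prod v [] = v"
  by (simp add: row_prod_def)

lemma row_prod_Cons [simp]: "row_prod v (w # ws) = row_prod (vecmat v (Amat w)) ws"
  by (simp add: row_prod_def)

lemma row_prod_snoc: "row_prod v (ws @ [w]) = vecmat (row_prod v ws) (Amat w)"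
  by (simp add: row_prod_def)

lemma row_prod_add: "row_prod (\<lambda>j. u j + v j) ws = (\<lambda>j. row_prod u ws j + row_prod v ws j)"
proof (induction ws arbitrary: u v)
  case (Cons w ws)
  have "vecmat (\<lambda>j. u j + v j) (Amat w) = (\<lambda>j. vecmat u (Amat w) j + vecmat v (Amat w) j)"
    by (simp add: vecmat_def sum.distrib algebra_simps)
  then show ?case by (simp add: Cons.IH)
qed simp

definition omega_word :: "nat \<Rightarrow> nat \<Rightarrow> nat \<Rightarrow> nat \<Rightarrow> nat list" where
  "omega_word n \<alpha> \<beta> \<gamma> = map (omega n \<alpha> \<beta> \<gamma>) [0..<n]"

lemma cadp_eq_row_prod: "cadp n c \<alpha> \<beta> \<gamma> = row_prod (Lvec c) (omega_word n \<alpha> \<beta> \<gamma>) 0"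
  by (simp add: cadp_def row_prod_def omega_word_def foldl_map)

lemma omega_word_less_8: "w \<in> set (omega_word n \<alpha> \<beta> \<gamma>) \<Longrightarrow> w < 8"
  by (auto simp: omega_word_def omega_def coord_def)

section \<open>The carry automaton\<close>

lemma mod_pow2_Suc_eq_iff:
  "(u::nat) mod 2^Suc n = v mod 2^Suc n \<longleftrightarrow> u mod 2 = v mod 2 \<and> u div 2 mod 2^n = v div 2 mod 2^n"
proof -
  have split: "w mod 2^Suc n = 2 * (w div 2 mod 2^n) + w mod 2" for w :: nat
    by (simp add: mod_mult2_eq)
  have "2 * p + a = 2 * q + b \<longleftrightarrow> a = b \<and> p = q" if "a < 2" "b < 2" for p q a b :: nat
    using that by arith
  then show ?thesis
    unfolding split[of u] split[of v] by simp
qed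

lemma xor_mod_pow2: "xor ((u::nat) mod 2^n) (v mod 2^n) = xor u v mod 2^n"
  by (simp flip: take_bit_eq_mod)

lemma xor_mod_2: "xor ((u::nat) mod 2) (v mod 2) = xor u v mod 2"
  using xor_mod_pow2[of u 1 v] by (simp only: power_one_right)

lemma xor_div_2: "xor (u::nat) v div 2 = xor (u div 2) (v div 2)"
  by (subst xor_rec) simp

lemma xor_less_2: "(u::nat) < 2 \<Longrightarrow> v < 2 \<Longrightarrow> xor u v < 2"
  by (auto simp: less_2_cases_iff)

lemma xor_double_add:
  "(u::nat) < 2 \<Longrightarrow> v < 2 \<Longrightarrow> xor (2 * x + u) (2 * y + v) = 2 * xor x y + xor u v"
  by (subst xor_rec) (auto simp: less_2_cases_iff)

lemma three_bits_decode:
  assumes "c1 < 2" "c2 < 2" "c3 < 2"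
  shows "(4 * c1 + 2 * c2 + c3) div 4 = c1 \<and> (4 * c1 + 2 * c2 + c3) div 2 mod 2 = c2
    \<and> (4 * c1 + 2 * c2 + c3) mod 2 = (c3::nat)"
  using assms by (auto simp: less_2_cases_iff)

lemma xor_mod_pow2_Suc_eq_iff:
  fixes u v z :: nat
  shows "xor (u mod 2^Suc n) (v mod 2^Suc n) = z mod 2^Suc n \<longleftrightarrow>
    xor (u mod 2) (v mod 2) = z mod 2 \<and> xor (u div 2 mod 2^n) (v div 2 mod 2^n) = z div 2 mod 2^n"
  by (simp only: xor_mod_pow2 xor_mod_2 mod_pow2_Suc_eq_iff xor_div_2)

definition lsb_letter :: "nat \<Rightarrow> nat \<Rightarrow> nat \<Rightarrow> nat" where
  "lsb_letter a b g = 4 * (a mod 2) + 2 * (b mod 2) + g mod 2"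

lemma coord_Suc: "i < n \<Longrightarrow> coord (Suc n) x i = coord n (x div 2) i"
  by (simp add: coord_def bit_Suc flip: Suc_diff_Suc)

lemma coord_Suc_last: "coord (Suc n) x n = x mod 2"
  by (simp add: coord_def bit_0 odd_iff_mod_2_eq_one)

lemma omega_word_Suc:
  "omega_word (Suc n) a b g = omega_word n (a div 2) (b div 2) (g div 2) @ [lsb_letter a b g]"
  by (simp add: omega_word_def omega_def coord_Suc coord_Suc_last lsb_letter_def)

text \<open>The state \<open>s = 4 s\<^sub>0 + 2 s\<^sub>1 + s\<^sub>2\<close> holds the incoming carries of the three additions,
  and \<open>c\<close> is the outgoing carry of the last one.\<close>

definition carry_solution :: "nat \<Rightarrow> nat \<Rightarrow> nat \<Rightarrow> nat \<Rightarrow> nat \<Rightarrow> nat \<Rightarrow> nat \<Rightarrow> nat \<Rightarrow> bool" where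
  "carry_solution n a b g s c x y \<longleftrightarrow>
     xor ((x + a + s div 4) mod 2^n) ((y + b + s div 2 mod 2) mod 2^n) = (xor x y + g + s mod 2) mod 2^n
     \<and> (xor x y + g + s mod 2) div 2^n mod 2 = c"

definition digit_admissible :: "nat \<Rightarrow> nat \<Rightarrow> nat \<Rightarrow> nat \<Rightarrow> bool" where
  "digit_admissible w s x0 y0 \<longleftrightarrow>
     xor ((x0 + w div 4 + s div 4) mod 2) ((y0 + w div 2 mod 2 + s div 2 mod 2) mod 2) =
     (xor x0 y0 + w mod 2 + s mod 2) mod 2"

definition next_state :: "nat \<Rightarrow> nat \<Rightarrow> nat \<Rightarrow> nat \<Rightarrow> nat" where
  "next_state w s x0 y0 =
     4 * ((x0 + w div 4 + s div 4) div 2) + 2 * ((y0 + w div 2 mod 2 + s div 2 mod 2) div 2) +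
     (xor x0 y0 + w mod 2 + s mod 2) div 2"

lemma carry_solution_Suc:
  assumes "x0 < 2" "y0 < 2" "s < 8"
  shows "carry_solution (Suc n) a b g s c (2 * x + x0) (2 * y + y0) \<longleftrightarrow>
    digit_admissible (lsb_letter a b g) s x0 y0 \<and>
    carry_solution n (a div 2) (b div 2) (g div 2) (next_state (lsb_letter a b g) s x0 y0) c x y"
proof -
  define u1 u2 u3 where "u1 = x0 + a mod 2 + s div 4" and "u2 = y0 + b mod 2 + s div 2 mod 2"
    and "u3 = xor x0 y0 + g mod 2 + s mod 2"
  have "xor x0 y0 < 2" using assms(1,2) by (rule xor_less_2)
  then have carries: "u1 div 2 < 2" "u2 div 2 < 2" "u3 div 2 < 2"
    using assms unfolding u1_def u2_def u3_def by linarith+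
  have letter: "lsb_letter a b g div 4 = a mod 2" "lsb_letter a b g div 2 mod 2 = b mod 2"
    "lsb_letter a b g mod 2 = g mod 2"
    using three_bits_decode[of "a mod 2" "b mod 2" "g mod 2"] by (simp_all add: lsb_letter_def)
  have digit: "digit_admissible (lsb_letter a b g) s x0 y0 \<longleftrightarrow> xor (u1 mod 2) (u2 mod 2) = u3 mod 2"
    by (simp add: digit_admissible_def letter u1_def u2_def u3_def)
  have "next_state (lsb_letter a b g) s x0 y0 = 4 * (u1 div 2) + 2 * (u2 div 2) + u3 div 2"
    by (simp add: next_state_def letter u1_def u2_def u3_def)
  then have state: "next_state (lsb_letter a b g) s x0 y0 div 4 = u1 div 2"
    "next_state (lsb_letter a b g) s x0 y0 div 2 mod 2 = u2 div 2"
    "next_state (lsb_letter a b g) s x0 y0 mod 2 = u3 div 2"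
    using three_bits_decode[OF carries] by auto
  have sums: "2 * x + x0 + a + s div 4 = 2 * (x + a div 2) + u1"
    "2 * y + y0 + b + s div 2 mod 2 = 2 * (y + b div 2) + u2"
    "xor (2 * x + x0) (2 * y + y0) + g + s mod 2 = 2 * (xor x y + g div 2) + u3"
    using xor_double_add[OF assms(1,2)] by (simp_all add: u1_def u2_def u3_def)
  show ?thesis
    unfolding carry_solution_def sums xor_mod_pow2_Suc_eq_iff digit state
    by (simp add: div_mult2_eq add.assoc)
qed

lemma Amat_transition:
  assumes "w < 8" "s < 8"
  shows "4 * (\<Sum>i<8. f i * Amat w i s) =
    (\<Sum>x0<2. \<Sum>y0<2. if digit_admissible w s x0 y0 then f (next_state w s x0 y0) else 0)"
  using less_8_cases[OF assms(1)] less_8_cases[OF assms(2)]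
  unfolding sum_lessThan_2
  by (elim disjE; simp add: sum_lessThan_8 Amat_def A0_def A0_rows_def digit_admissible_def
      next_state_def; simp add: numeral_eq_Suc)

definition carry_count :: "nat \<Rightarrow> nat \<Rightarrow> nat \<Rightarrow> nat \<Rightarrow> nat \<Rightarrow> nat \<Rightarrow> real" where
  "carry_count n a b g s c = (\<Sum>x<2^n. \<Sum>y<2^n. if carry_solution n a b g s c x y then 1 else 0)"

lemma sum_lessThan_double: "(\<Sum>x<2 * m. f x) = (\<Sum>x0<2. \<Sum>x<m. f (2 * x + x0 :: nat))"
  by (induction m) (simp_all add: sum_lessThan_2 sum.distrib algebra_simps)

lemma carry_count_Suc:
  assumes "s < 8"
  shows "carry_count (Suc n) a b g s c =
    (\<Sum>x0<2. \<Sum>y0<2. if digit_admissible (lsb_letter a b g) s x0 y0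
       then carry_count n (a div 2) (b div 2) (g div 2) (next_state (lsb_letter a b g) s x0 y0) c
       else 0)" (is "_ = ?rhs")
proof -
  have "carry_count (Suc n) a b g s c =
      (\<Sum>x0<2. \<Sum>y0<2. \<Sum>x<2^n. \<Sum>y<2^n.
         if carry_solution (Suc n) a b g s c (2 * x + x0) (2 * y + y0) then 1 else 0)"
    unfolding carry_count_def power_Suc sum_lessThan_double
    by (rule sum.cong[OF refl], rule sum.swap)
  also have "\<dots> = ?rhs"
    by (intro sum.cong refl) (auto simp: carry_solution_Suc assms carry_count_def)
  finally show ?thesis .
qed

lemma row_prod_omega_word_eq_carry_count:
  assumes "g < 2^n" and "s < 8"
  shows "row_prod (Lvec c) (omega_word n a b g) s = carry_count n a b g s c / 4^n"
  using assms
proof (induction n arbitrary: a b g s)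
  case 0
  then show ?case by (simp add: omega_word_def carry_count_def carry_solution_def Lvec_def)
next
  case (Suc n)
  let ?w = "lsb_letter a b g"
  let ?f = "\<lambda>i. carry_count n (a div 2) (b div 2) (g div 2) i c / 4^n"
  have "?w < 8" by (simp add: lsb_letter_def)
  have "g div 2 < 2^n" using Suc.prems(1) by simp
  then have IH: "row_prod (Lvec c) (omega_word n (a div 2) (b div 2) (g div 2)) i = ?f i" if "i < 8" for i
    using Suc.IH that by blast
  have "row_prod (Lvec c) (omega_word (Suc n) a b g) s = (\<Sum>i<8. ?f i * Amat ?w i s)"
    unfolding omega_word_Suc row_prod_snoc vecmat_def by (intro sum.cong) (simp_all add: IH)
  also have "\<dots> = (4 * (\<Sum>i<8. ?f i * Amat ?w i s)) / 4"
    by simp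
  also have "\<dots> = (\<Sum>x0<2. \<Sum>y0<2. if digit_admissible ?w s x0 y0 then ?f (next_state ?w s x0 y0) else 0) / 4"
    by (simp only: Amat_transition[OF \<open>?w < 8\<close> Suc.prems(2)])
  also have "\<dots> = carry_count (Suc n) a b g s c / 4 ^ Suc n"
    by (simp add: carry_count_Suc[OF Suc.prems(2)] sum_lessThan_2 add_divide_distrib)
  finally show ?case .
qed

lemma card_pairs_eq_sum:
  "real (card {(x, y). x < (N::nat) \<and> y < N \<and> Q x y}) = (\<Sum>x<N. \<Sum>y<N. if Q x y then 1 else 0)"
proof -
  have "{(x, y). x < N \<and> y < N \<and> Q x y} = Sigma {..<N} (\<lambda>x. {y \<in> {..<N}. Q x y})"
    by auto
  moreover have "real (card {y \<in> {..<N}. Q x y}) = (\<Sum>y<N. if Q x y then 1 else 0)" for x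
    by (simp flip: sum.inter_filter)
  ultimately show ?thesis
    by (simp add: card_SigmaI)
qed

lemma adp_xor_eq_carry_count:
  "adp_xor n a b g = (carry_count n a b g 0 0 + carry_count n a b g 0 1) / 4^n"
proof -
  have carry_cases: "(if P \<and> m mod 2 = 0 then 1 else 0) + (if P \<and> m mod 2 = 1 then 1 else 0) =
      (if P then 1 else (0::real))" for P and m :: nat
    by (cases "even m") auto
  have "carry_count n a b g 0 0 + carry_count n a b g 0 1 =
      (\<Sum>x<2^n. \<Sum>y<2^n.
         if xor ((x + a) mod 2^n) ((y + b) mod 2^n) = (xor x y + g) mod 2^n then 1 else 0)"
    unfolding carry_count_def carry_solution_def sum.distrib[symmetric]
    by (simp only: carry_cases div_0 mod_0 add_0_right)
  then show ?thesis
    by (simp only: adp_xor_def card_pairs_eq_sum)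
qed

lemma adp_xor_eq_cadp_sum:
  "\<gamma> < 2^n \<Longrightarrow> adp_xor n \<alpha> \<beta> \<gamma> = cadp n 0 \<alpha> \<beta> \<gamma> + cadp n 1 \<alpha> \<beta> \<gamma>"
  by (simp add: adp_xor_eq_carry_count cadp_eq_row_prod row_prod_omega_word_eq_carry_count
      add_divide_distrib)

lemma cadp_nonneg: "\<gamma> < 2^n \<Longrightarrow> 0 \<le> cadp n c \<alpha> \<beta> \<gamma>"
  by (simp add: cadp_eq_row_prod row_prod_omega_word_eq_carry_count carry_count_def sum_nonneg)

section \<open>Domination by the word of \<open>(\<alpha>, \<alpha>, 0)\<close>\<close>

text \<open>Up to a factor 4, the four sums are entries of the next row; this is why they belong
  to the invariant.\<close>

definition row_bounds :: "real \<Rightarrow> real \<Rightarrow> (nat \<Rightarrow> real) \<Rightarrow> bool" where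
  "row_bounds a b v \<longleftrightarrow>
     0 \<le> v 0 \<and> 0 \<le> v 1 \<and> 0 \<le> v 2 \<and> 0 \<le> v 3 \<and> 0 \<le> v 4 \<and> 0 \<le> v 5 \<and> 0 \<le> v 6 \<and> 0 \<le> v 7 \<and>
     v 0 \<le> a \<and> v 1 \<le> a \<and> v 2 \<le> a \<and> v 3 \<le> a \<and> v 4 \<le> b \<and> v 5 \<le> b \<and> v 6 \<le> b \<and> v 7 \<le> b \<and>
     v 0 + v 1 + v 4 + v 5 \<le> a + b \<and> v 2 + v 3 + v 6 + v 7 \<le> a + b \<and>
     v 0 + v 2 + v 4 + v 6 \<le> a + b \<and> v 1 + v 3 + v 5 + v 7 \<le> a + b"

text \<open>Rows along the word of \<open>(\<alpha>, \<alpha>, 0)\<close> have this shape: only the carry states 0, 3, 5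
  and 6 are reachable.\<close>

definition diagonal_row :: "real \<Rightarrow> real \<Rightarrow> real \<Rightarrow> (nat \<Rightarrow> real) \<Rightarrow> bool" where
  "diagonal_row a b d W \<longleftrightarrow>
     W 0 = a \<and> W 1 = 0 \<and> W 2 = 0 \<and> W 3 = d \<and> W 4 = 0 \<and> W 5 = d \<and> W 6 = b \<and> W 7 = 0"

definition diagonal_letter :: "nat \<Rightarrow> nat" where
  "diagonal_letter w = 6 * (w div 4)"

lemma diagonal_letter_eq: "w < 8 \<Longrightarrow> diagonal_letter w = (if w < 4 then 0 else 6)"
  by (auto simp: diagonal_letter_def dest: less_8_cases)

lemma row_bounds_vecmat:
  assumes "w < 8" and "row_bounds a b v"
  shows "row_bounds (if w < 4 then a else (a + b) / 4) (if w < 4 then (a + b) / 4 else b)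
           (vecmat v (Amat w))"
  using less_8_cases[OF assms(1)] assms(2)
  by (elim disjE; simp add: vecmat_Amat_simps row_bounds_def; (elim conjE)?; (intro conjI)?; argo)

lemma diagonal_row_vecmat:
  assumes "diagonal_row a b d W" and "w < 8"
  shows "diagonal_row (if w < 4 then a else (a + b) / 4) (if w < 4 then (a + b) / 4 else b)
           (if w < 4 then (a + d) / 4 else (b + d) / 4) (vecmat W (Amat (diagonal_letter w)))"
  using assms by (simp add: diagonal_letter_eq vecmat_Amat_simps diagonal_row_def)

lemma row_prod_le_diagonal:
  assumes "\<forall>w\<in>set ws. w < 8" and "row_bounds a b v" and "diagonal_row a b d W"
  shows "row_prod v ws 0 \<le> row_prod W (map diagonal_letter ws) 0"
  using assms
proof (induction ws arbitrary: a b d v W)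
  case Nil
  then show ?case by (simp add: row_bounds_def diagonal_row_def)
next
  case (Cons w ws)
  then have "w < 8" by simp
  from row_bounds_vecmat[OF this Cons.prems(2)] diagonal_row_vecmat[OF Cons.prems(3) this]
  show ?case using Cons.IH Cons.prems(1) by simp
qed

lemma row_bounds_first_letter:
  assumes "w < 8" and "\<forall>j<8. 0 \<le> v j \<and> v j \<le> 1"
  shows "row_bounds 1 1 (vecmat v (Amat w))"
proof -
  have "0 \<le> v 0 \<and> v 0 \<le> 1" "0 \<le> v 1 \<and> v 1 \<le> 1" "0 \<le> v 2 \<and> v 2 \<le> 1" "0 \<le> v 3 \<and> v 3 \<le> 1"
    "0 \<le> v 4 \<and> v 4 \<le> 1" "0 \<le> v 5 \<and> v 5 \<le> 1" "0 \<le> v 6 \<and> v 6 \<le> 1" "0 \<le> v 7 \<and> v 7 \<le> 1"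
    using assms(2) by auto
  then show ?thesis using less_8_cases[OF assms(1)]
    by (elim disjE; simp add: vecmat_Amat_simps row_bounds_def; (elim conjE)?; (intro conjI)?; linarith)
qed

lemma diagonal_row_first_letter:
  "w < 8 \<Longrightarrow> diagonal_row 1 1 (1/2) (vecmat (Lvec 0) (Amat (diagonal_letter w)))"
  by (simp add: diagonal_letter_eq vecmat_Amat_simps diagonal_row_def Lvec_def)

lemma row_prod_le_diagonal_word:
  assumes "\<forall>w\<in>set ws. w < 8" and "\<forall>j<8. 0 \<le> v j \<and> v j \<le> 1"
  shows "row_prod v ws 0 \<le> row_prod (Lvec 0) (map diagonal_letter ws) 0"
proof (cases ws)
  case Nil
  then show ?thesis using assms(2) by (simp add: Lvec_def)
next
  case (Cons w ws')
  with assms(1) have "w < 8" by simp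
  from row_prod_le_diagonal[OF _ row_bounds_first_letter[OF this assms(2)]
      diagonal_row_first_letter[OF this]]
  show ?thesis using assms(1) Cons by simp
qed

lemma map_diagonal_letter_omega_word:
  "map diagonal_letter (omega_word n \<alpha> \<beta> \<gamma>) = omega_word n \<alpha> \<alpha> 0"
  by (simp add: omega_word_def omega_def diagonal_letter_def coord_def)

lemma row_prod_omega_word_le_cadp_diagonal:
  assumes "\<forall>j<8. 0 \<le> v j \<and> v j \<le> 1"
  shows "row_prod v (omega_word n \<alpha> \<beta> \<gamma>) 0 \<le> cadp n 0 \<alpha> \<alpha> 0"
  using row_prod_le_diagonal_word[OF _ assms, of "omega_word n \<alpha> \<beta> \<gamma>"]
  by (simp add: omega_word_less_8 map_diagonal_letter_omega_word cadp_eq_row_prod)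

lemma cadp_le_cadp_diagonal: "cadp n c \<alpha> \<beta> \<gamma> \<le> cadp n 0 \<alpha> \<alpha> 0"
  unfolding cadp_eq_row_prod[of n c]
  by (rule row_prod_omega_word_le_cadp_diagonal) (simp add: Lvec_def)

lemma adp_xor_le_cadp_diagonal:
  assumes "\<gamma> < 2^n"
  shows "adp_xor n \<alpha> \<beta> \<gamma> \<le> cadp n 0 \<alpha> \<alpha> 0"
proof -
  have "adp_xor n \<alpha> \<beta> \<gamma> = row_prod (\<lambda>j. Lvec 0 j + Lvec 1 j) (omega_word n \<alpha> \<beta> \<gamma>) 0"
    using assms by (simp add: adp_xor_eq_cadp_sum cadp_eq_row_prod row_prod_add)
  also have "\<dots> \<le> cadp n 0 \<alpha> \<alpha> 0"
    by (rule row_prod_omega_word_le_cadp_diagonal) (simp add: Lvec_def)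
  finally show ?thesis .
qed

lemma adp_xor_diagonal_eq_cadp: "adp_xor n \<alpha> \<alpha> 0 = cadp n 0 \<alpha> \<alpha> 0"
  using adp_xor_le_cadp_diagonal[of 0 n \<alpha> \<alpha>] adp_xor_eq_cadp_sum[of 0 n \<alpha> \<alpha>]
    cadp_nonneg[of 0 n 1 \<alpha> \<alpha>]
  by simp

theorem lemma4:
  fixes n \<alpha> c :: nat
  assumes "\<alpha> < 2 ^ n" and "c \<le> 1"
  shows "Max {cadp n c \<alpha> \<beta> \<gamma> | \<beta> \<gamma>. \<beta> < 2 ^ n \<and> \<gamma> < 2 ^ n}
           \<le> Max {cadp n 0 \<alpha> \<beta> \<gamma> | \<beta> \<gamma>. \<beta> < 2 ^ n \<and> \<gamma> < 2 ^ n}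
       \<and> Max {cadp n 0 \<alpha> \<beta> \<gamma> | \<beta> \<gamma>. \<beta> < 2 ^ n \<and> \<gamma> < 2 ^ n}
           = Max {adp_xor n \<alpha> \<beta> \<gamma> | \<beta> \<gamma>. \<beta> < 2 ^ n \<and> \<gamma> < 2 ^ n}
       \<and> Max {adp_xor n \<alpha> \<beta> \<gamma> | \<beta> \<gamma>. \<beta> < 2 ^ n \<and> \<gamma> < 2 ^ n}
           = adp_xor n \<alpha> \<alpha> 0"
proof -
  let ?M = "cadp n 0 \<alpha> \<alpha> 0"
  have finite: "finite {f \<beta> \<gamma> | \<beta> \<gamma>. \<beta> < 2 ^ n \<and> \<gamma> < (2::nat) ^ n}"
    for f :: "nat \<Rightarrow> nat \<Rightarrow> real"
    by (rule finite_image_set2) simp_all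
  have diagonal_mem: "f \<alpha> 0 \<in> {f \<beta> \<gamma> | \<beta> \<gamma>. \<beta> < 2 ^ n \<and> \<gamma> < (2::nat) ^ n}"
    for f :: "nat \<Rightarrow> nat \<Rightarrow> real"
    using assms(1) by force
  have "Max {cadp n c \<alpha> \<beta> \<gamma> | \<beta> \<gamma>. \<beta> < 2 ^ n \<and> \<gamma> < 2 ^ n} \<le> ?M"
    using diagonal_mem[of "cadp n c \<alpha>"]
    by (intro Max.boundedI finite) (auto simp: cadp_le_cadp_diagonal)
  moreover have "Max {cadp n 0 \<alpha> \<beta> \<gamma> | \<beta> \<gamma>. \<beta> < 2 ^ n \<and> \<gamma> < 2 ^ n} = ?M"
    by (rule Max_eqI[OF finite _ diagonal_mem]) (auto simp: cadp_le_cadp_diagonal)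
  moreover have "Max {adp_xor n \<alpha> \<beta> \<gamma> | \<beta> \<gamma>. \<beta> < 2 ^ n \<and> \<gamma> < 2 ^ n} = adp_xor n \<alpha> \<alpha> 0"
    by (rule Max_eqI[OF finite _ diagonal_mem])
      (auto simp: adp_xor_le_cadp_diagonal adp_xor_diagonal_eq_cadp)
  ultimately show ?thesis
    by (simp add: adp_xor_diagonal_eq_cadp)
qed

end
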